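(* Let $R$ be a commutative ring in which every prime ideal is maximal. Let $X$ be the set of maximal ideals $P$ of $R$ such that $PR_P=0$, and let $A$ be the kernel of the natural map $R\to\prod_{P\in X}R_P$. If $R$ is P-coherent, then $A$ is a pure ideal of $R$ (a pure submodule of $R$) and $X=V(A)$.
   Context: $R$ is P-coherent if every principal ideal is finitely presented. An ideal $A$ is pure if $A\to R$ remains injective after tensoring with every module. $V(A)$ is the set of prime ideals containing $A$. *)

theory Defs
  imports Main "HOL.Modules"
begin

definition ideal :: "'a::comm_ring_1 set \<Rightarrow> bool" where
  "ideal I \<longleftrightarrow> 0 \<in> I \<and> (\<forall>x\<in>I. \<forall>y\<in>I. x + y \<in> I) \<and> (\<forall>r. \<forall>x\<in>I. r * x \<in> I)"

definition prime_ideal :: "'a::comm_ring_1 set \<Rightarrow> bool" where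
  "prime_ideal P \<longleftrightarrow> ideal P \<and> P \<noteq> UNIV \<and> (\<forall>a b. a * b \<in> P \<longrightarrow> a \<in> P \<or> b \<in> P)"

definition maximal_ideal :: "'a::comm_ring_1 set \<Rightarrow> bool" where
  "maximal_ideal P \<longleftrightarrow> ideal P \<and> P \<noteq> UNIV \<and>
     (\<forall>J. ideal J \<and> P \<subseteq> J \<longrightarrow> J = P \<or> J = UNIV)"

definition V :: "'a::comm_ring_1 set \<Rightarrow> 'a set set" where
  "V A = {P. prime_ideal P \<and> A \<subseteq> P}"

definition principal_ideal :: "'a::comm_ring_1 \<Rightarrow> 'a set" where
  "principal_ideal a = {r * a | r. True}"

text \<open>In R_P = (R - P)^{-1} R one has r/1 = 0 iff s*r = 0 for some s not in P.\<close>
definition loc_zero :: "'a::comm_ring_1 set \<Rightarrow> 'a \<Rightarrow> bool" where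
  "loc_zero P r \<longleftrightarrow> (\<exists>s. s \<notin> P \<and> s * r = 0)"

text \<open>P R_P = 0 iff p/1 = 0 in R_P for every generator p in P.\<close>
definition ext_zero :: "'a::comm_ring_1 set \<Rightarrow> bool" where
  "ext_zero P \<longleftrightarrow> (\<forall>p\<in>P. loc_zero P p)"

text \<open>Kernel of the natural map R \<rightarrow> prod_{P in X} R_P, r \<mapsto> (r/1)_P.\<close>
definition loc_kernel :: "'a::comm_ring_1 set set \<Rightarrow> 'a set" where
  "loc_kernel X = {r. \<forall>P\<in>X. loc_zero P r}"

text \<open>An ideal I is finitely presented (as R-module) iff there are generators
  x_0..x_{n-1} of I such that the kernel of R^n \<rightarrow> I, c \<mapsto> sum c_i x_i, is a finitely
  generated submodule of R^n. Vectors of R^n are functions nat \<Rightarrow> 'a vanishing from n on.\<close>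
definition relation_module :: "nat \<Rightarrow> (nat \<Rightarrow> 'a::comm_ring_1) \<Rightarrow> (nat \<Rightarrow> 'a) set" where
  "relation_module n x = {c. (\<forall>i\<ge>n. c i = 0) \<and> (\<Sum>i<n. c i * x i) = 0}"

definition fin_gen_submodule :: "(nat \<Rightarrow> 'a::comm_ring_1) set \<Rightarrow> bool" where
  "fin_gen_submodule K \<longleftrightarrow>
     (\<exists>m (g :: nat \<Rightarrow> nat \<Rightarrow> 'a). K = {(\<lambda>i. \<Sum>j<m. r j * g j i) | r. True})"

definition finitely_presented_ideal :: "'a::comm_ring_1 set \<Rightarrow> bool" where
  "finitely_presented_ideal I \<longleftrightarrow>
     (\<exists>n (x :: nat \<Rightarrow> 'a). I = {(\<Sum>i<n. c i * x i) | c. True} \<and>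
        fin_gen_submodule (relation_module n x))"

definition P_coherent :: "'a::comm_ring_1 itself \<Rightarrow> bool" where
  "P_coherent _ \<longleftrightarrow> (\<forall>a::'a. finitely_presented_ideal (principal_ideal a))"

text \<open>For a submodule B of R (an ideal, or R itself) and an R-module M (given by
  scale on an abelian group type 'm), B \<otimes>_R M is the free abelian group on B \<times> M
  modulo the bilinearity relations. Elements of the free abelian group are
  finitely supported functions ('a \<times> 'm) \<Rightarrow> int.\<close>
definition delta :: "'x \<Rightarrow> 'x \<Rightarrow> int" where
  "delta p = (\<lambda>q. if q = p then 1 else 0)"

definition tensor_relators ::
  "('a::comm_ring_1 \<Rightarrow> 'm::ab_group_add \<Rightarrow> 'm) \<Rightarrow> 'a set \<Rightarrow> ('a \<times> 'm \<Rightarrow> int) set" where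
  "tensor_relators scale B =
     {(\<lambda>q. delta (a + a', m) q - delta (a, m) q - delta (a', m) q) | a a' m. a \<in> B \<and> a' \<in> B}
   \<union> {(\<lambda>q. delta (a, m + m') q - delta (a, m) q - delta (a, m') q) | a m m'. a \<in> B}
   \<union> {(\<lambda>q. delta (r * a, m) q - delta (a, scale r m) q) | r a m. a \<in> B}"

text \<open>The subgroup generated by the relators: a formal sum is zero in B \<otimes>_R M iff it lies here.\<close>
inductive_set tensor_rel_span ::
  "('a::comm_ring_1 \<Rightarrow> 'm::ab_group_add \<Rightarrow> 'm) \<Rightarrow> 'a set \<Rightarrow> ('a \<times> 'm \<Rightarrow> int) set"
  for scale B where
  zero: "(\<lambda>_. 0) \<in> tensor_rel_span scale B"
| gen: "g \<in> tensor_relators scale B \<Longrightarrow> g \<in> tensor_rel_span scale B"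
| diff: "x \<in> tensor_rel_span scale B \<Longrightarrow> y \<in> tensor_rel_span scale B \<Longrightarrow>
         (\<lambda>q. x q - y q) \<in> tensor_rel_span scale B"

text \<open>The formal sum sum_i a_i \<otimes> m_i of a list of pairs (every element of
  B \<otimes> M is the class of such a sum).\<close>
definition formal_sum :: "('a \<times> 'm) list \<Rightarrow> ('a \<times> 'm \<Rightarrow> int)" where
  "formal_sum xs = (\<lambda>q. int (count_list xs q))"

text \<open>A is pure iff A \<rightarrow> R stays injective after tensoring with every R-module M.
  The induced map A \<otimes> M \<rightarrow> R \<otimes> M sends the class of a formal sum to the class
  of the same formal sum; injectivity means: a formal sum supported on A \<times> M that
  vanishes in R \<otimes> M already vanishes in A \<otimes> M.\<close>
definition pure_ideal :: "'m::ab_group_add itself \<Rightarrow> 'a::comm_ring_1 set \<Rightarrow> bool" where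
  "pure_ideal _ A \<longleftrightarrow> ideal A \<and>
     (\<forall>(scale :: 'a \<Rightarrow> 'm \<Rightarrow> 'm). module scale \<longrightarrow>
        (\<forall>xs. set xs \<subseteq> A \<times> UNIV \<longrightarrow>
            formal_sum xs \<in> tensor_rel_span scale UNIV \<longrightarrow>
            formal_sum xs \<in> tensor_rel_span scale A))"

end

theory Submission
  imports Defs "HOL-Library.Set_Algebras"
begin

text \<open>In a ring of dimension zero every element is \<open>\<pi>\<close>-regular, so each \<open>x\<close> has an idempotent
  multiple \<open>f\<close> with \<open>V(f) = V(x)\<close>. Let \<open>P \<supseteq> A\<close> be prime and \<open>p \<in> P\<close>. By P-coherence \<open>Ann p\<close> is
  generated by finitely many \<open>t\<^sub>i\<close>; if \<open>p/1 \<noteq> 0\<close> in \<open>R\<^sub>P\<close>, all \<open>t\<^sub>i\<close> lie in \<open>P\<close>, and the product of the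
  \<open>1 - f\<close> over the idempotents attached to \<open>p\<close> and the \<open>t\<^sub>i\<close> is an element of \<open>A\<close> outside \<open>P\<close>. Hence
  \<open>V(A) = X\<close>. Consequently every \<open>a \<in> A\<close> satisfies \<open>a = ae\<close> for some \<open>e \<in> A\<close>, and an ideal with this
  property is pure: an \<open>e\<close> that works for all first coordinates of a formal sum turns a derivation
  of its vanishing in \<open>R \<otimes> M\<close> into one in \<open>A \<otimes> M\<close>.\<close>

lemma ideal_zero: "ideal I \<Longrightarrow> 0 \<in> I"
  by (simp add: ideal_def)

lemma ideal_add: "ideal I \<Longrightarrow> x \<in> I \<Longrightarrow> y \<in> I \<Longrightarrow> x + y \<in> I"
  by (simp add: ideal_def)

lemma ideal_mult_left: "ideal I \<Longrightarrow> x \<in> I \<Longrightarrow> r * x \<in> I"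
  by (simp add: ideal_def)

lemma ideal_mult_right: "ideal I \<Longrightarrow> x \<in> I \<Longrightarrow> x * r \<in> I"
  by (metis ideal_mult_left mult.commute)

lemma ideal_diff: "ideal I \<Longrightarrow> x \<in> I \<Longrightarrow> y \<in> I \<Longrightarrow> x - y \<in> I"
  using ideal_add[of I x "-1 * y"] ideal_mult_left[of I y "-1"] by simp

lemma ideal_eq_UNIV_if_one:
  assumes "ideal I" "1 \<in> I"
  shows "I = UNIV"
proof -
  have "r \<in> I" for r using ideal_mult_left[OF assms, of r] by simp
  then show ?thesis by blast
qed

lemma ideal_sum_lessThan: "ideal I \<Longrightarrow> (\<And>i. i < (k::nat) \<Longrightarrow> t i \<in> I) \<Longrightarrow> (\<Sum>i<k. c i * t i) \<in> I"
  by (induction k) (simp_all add: ideal_zero ideal_add ideal_mult_left)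

lemma ideal_principal: "ideal (principal_ideal a)"
  unfolding ideal_def principal_ideal_def
proof (intro conjI ballI allI)
  show "0 \<in> {r * a | r. True}" by (intro CollectI exI[of _ 0]) simp
next
  fix x y assume "x \<in> {r * a | r. True}" "y \<in> {r * a | r. True}"
  then obtain r s where "x = r * a" "y = s * a" by blast
  then show "x + y \<in> {r * a | r. True}" by (intro CollectI exI[of _ "r + s"]) (simp add: distrib_right)
next
  fix c x assume "x \<in> {r * a | r. True}"
  then obtain r where "x = r * a" by blast
  then show "c * x \<in> {r * a | r. True}" by (intro CollectI exI[of _ "c * r"]) (simp add: mult.assoc)
qed

lemma mem_principal_ideal_self: "a \<in> principal_ideal a"
  unfolding principal_ideal_def by (intro CollectI exI[of _ 1]) simp

lemma ideal_annihilator: "ideal {r. r * a = 0}"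
  by (simp add: ideal_def algebra_simps)

lemma ideal_set_plus:
  assumes I: "ideal I" and J: "ideal J"
  shows "ideal (I + J)"
  unfolding ideal_def
proof (intro conjI ballI allI)
  show "0 \<in> I + J"
    using set_plus_intro[OF ideal_zero[OF I] ideal_zero[OF J]] by simp
next
  fix u v assume "u \<in> I + J" "v \<in> I + J"
  then obtain x y x' y' where xy: "u = x + y" "v = x' + y'" and "x \<in> I" "y \<in> J" "x' \<in> I" "y' \<in> J"
    by (elim set_plus_elim)
  then have "(x + x') + (y + y') \<in> I + J"
    by (intro set_plus_intro ideal_add[OF I] ideal_add[OF J])
  moreover have "u + v = (x + x') + (y + y')" unfolding xy by (simp add: algebra_simps)
  ultimately show "u + v \<in> I + J" by simp
next
  fix r u assume "u \<in> I + J"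
  then obtain x y where xy: "u = x + y" and "x \<in> I" "y \<in> J"
    by (elim set_plus_elim)
  then have "r * x + r * y \<in> I + J"
    by (intro set_plus_intro ideal_mult_left[OF I] ideal_mult_left[OF J])
  then show "r * u \<in> I + J" unfolding xy by (simp add: distrib_left)
qed

lemma subset_set_plus_left: "ideal J \<Longrightarrow> I \<subseteq> I + J"
  using set_plus_intro[of _ I 0 J] by (force simp: ideal_zero)

lemma subset_set_plus_right: "ideal I \<Longrightarrow> J \<subseteq> I + J"
  using set_plus_intro[of 0 I _ J] by (force simp: ideal_zero)

section \<open>Prime and maximal ideals\<close>

lemma prime_ideal_ideal: "prime_ideal P \<Longrightarrow> ideal P"
  by (simp add: prime_ideal_def)

lemma prime_ideal_one_notin: "prime_ideal P \<Longrightarrow> 1 \<notin> P"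
  using ideal_eq_UNIV_if_one by (auto simp: prime_ideal_def)

lemma prime_ideal_mult_notin: "prime_ideal P \<Longrightarrow> s \<notin> P \<Longrightarrow> t \<notin> P \<Longrightarrow> s * t \<notin> P"
  unfolding prime_ideal_def by blast

lemma prime_ideal_power: "prime_ideal P \<Longrightarrow> x ^ n \<in> P \<Longrightarrow> x \<in> P"
  by (induction n) (auto simp: prime_ideal_one_notin prime_ideal_def)

lemma prime_ideal_prod_notin:
  "finite F \<Longrightarrow> prime_ideal P \<Longrightarrow> (\<And>i. i \<in> F \<Longrightarrow> h i \<notin> P) \<Longrightarrow> prod h F \<notin> P"
  by (induction F rule: finite_induct) (simp_all add: prime_ideal_one_notin prime_ideal_mult_notin)

lemma maximal_ideal_plus_principal:
  assumes Q: "maximal_ideal Q" and x: "x \<notin> Q"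
  shows "Q + principal_ideal x = UNIV"
proof -
  have "ideal Q" using Q by (simp add: maximal_ideal_def)
  then have "ideal (Q + principal_ideal x)" "Q \<subseteq> Q + principal_ideal x"
    by (simp_all add: ideal_set_plus ideal_principal subset_set_plus_left)
  moreover have "x \<in> Q + principal_ideal x"
    using subset_set_plus_right[OF \<open>ideal Q\<close>] mem_principal_ideal_self by blast
  ultimately show ?thesis using Q x unfolding maximal_ideal_def by blast
qed

lemma maximal_ideal_one_combination:
  assumes "maximal_ideal Q" "x \<notin> Q"
  shows "\<exists>q\<in>Q. \<exists>r. 1 = q + r * x"
proof -
  from assms have "1 \<in> Q + principal_ideal x" by (simp add: maximal_ideal_plus_principal)
  then obtain q y where "1 = q + y" "q \<in> Q" "y \<in> principal_ideal x" by (rule set_plus_elim)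
  then show ?thesis unfolding principal_ideal_def by auto
qed

lemma maximal_imp_prime_ideal:
  assumes Q: "maximal_ideal Q"
  shows "prime_ideal Q"
  unfolding prime_ideal_def
proof (intro conjI allI impI)
  show I: "ideal Q" using Q by (simp add: maximal_ideal_def)
  show "Q \<noteq> UNIV" using Q by (simp add: maximal_ideal_def)
  fix a b assume ab: "a * b \<in> Q"
  show "a \<in> Q \<or> b \<in> Q"
  proof (cases "a \<in> Q")
    case False
    then obtain q r where "q \<in> Q" "1 = q + r * a" using maximal_ideal_one_combination[OF Q] by blast
    then have "b = q * b + r * (a * b)" by (metis mult_1 distrib_right mult.assoc)
    moreover have "q * b + r * (a * b) \<in> Q"
      using ideal_add[OF I ideal_mult_right[OF I \<open>q \<in> Q\<close>] ideal_mult_left[OF I ab]] .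
    ultimately show ?thesis by simp
  qed simp
qed

lemma ideal_Union_chain:
  assumes "C \<noteq> {}" "chain\<^sub>\<subseteq> C" "\<And>J. J \<in> C \<Longrightarrow> ideal J"
  shows "ideal (\<Union>C)"
  unfolding ideal_def
proof (intro conjI ballI allI)
  show "0 \<in> \<Union>C" using assms by (auto simp: ideal_zero)
next
  fix x y assume "x \<in> \<Union>C" "y \<in> \<Union>C"
  then obtain J J' where J: "J \<in> C" "J' \<in> C" "x \<in> J" "y \<in> J'" by blast
  with assms(2) have "J \<subseteq> J' \<or> J' \<subseteq> J" by (simp add: chain_subset_def)
  then have "x + y \<in> J' \<or> x + y \<in> J"
    using J assms(3) ideal_add by blast
  with J show "x + y \<in> \<Union>C" by blast
next
  fix r x assume "x \<in> \<Union>C"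
  then obtain J where "J \<in> C" "x \<in> J" by blast
  then have "r * x \<in> J" using assms(3) ideal_mult_left by blast
  with \<open>J \<in> C\<close> show "r * x \<in> \<Union>C" by blast
qed

lemma maximal_ideal_disjoint:
  assumes I: "ideal I" and IS: "I \<inter> S = {}"
  obtains M where "ideal M" "I \<subseteq> M" "M \<inter> S = {}"
    "\<And>J. ideal J \<Longrightarrow> M \<subseteq> J \<Longrightarrow> J \<inter> S = {} \<Longrightarrow> J = M"
proof -
  define \<A> where "\<A> = {J. ideal J \<and> I \<subseteq> J \<and> J \<inter> S = {}}"
  have chain_bound: "\<exists>U\<in>\<A>. \<forall>J\<in>C. J \<subseteq> U" if "C \<in> chains \<A>" for C
  proof (cases "C = {}")
    case True then show ?thesis using assms by (auto simp: \<A>_def)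
  next
    case False
    with that have "ideal (\<Union>C)" "I \<subseteq> \<Union>C" "\<Union>C \<inter> S = {}"
      by (auto simp: \<A>_def chains_def intro!: ideal_Union_chain)
    then show ?thesis by (auto simp: \<A>_def)
  qed
  obtain M where "M \<in> \<A>" and M_max: "\<forall>J\<in>\<A>. M \<subseteq> J \<longrightarrow> J = M"
    using Zorn_Lemma2[OF ballI, OF chain_bound] by blast
  moreover have "J = M" if "ideal J" "M \<subseteq> J" "J \<inter> S = {}" for J
  proof -
    have "J \<in> \<A>" using that \<open>M \<in> \<A>\<close> unfolding \<A>_def by blast
    with M_max \<open>M \<subseteq> J\<close> show ?thesis by blast
  qed
  ultimately show ?thesis using that unfolding \<A>_def by blast
qed

lemma prime_ideal_disjoint_multiplicative:
  fixes I :: "'a::comm_ring_1 set"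
  assumes I: "ideal I" and S1: "1 \<in> S" and S_mult: "\<And>a b. a \<in> S \<Longrightarrow> b \<in> S \<Longrightarrow> a * b \<in> S"
    and IS: "I \<inter> S = {}"
  obtains Q where "prime_ideal Q" "I \<subseteq> Q" "Q \<inter> S = {}"
proof -
  obtain M where M: "ideal M" "I \<subseteq> M" "M \<inter> S = {}"
    and M_max: "\<And>J. ideal J \<Longrightarrow> M \<subseteq> J \<Longrightarrow> J \<inter> S = {} \<Longrightarrow> J = M"
    by (rule maximal_ideal_disjoint[OF I IS]) blast
  have meets_S: "\<exists>m\<in>M. \<exists>r. m + r * a \<in> S" if "a \<notin> M" for a
  proof (rule ccontr)
    assume "\<not> ?thesis"
    then have "(M + principal_ideal a) \<inter> S = {}"
      by (auto simp: principal_ideal_def elim!: set_plus_elim)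
    moreover have "M \<subseteq> M + principal_ideal a"
      by (rule subset_set_plus_left[OF ideal_principal])
    ultimately have "M + principal_ideal a = M"
      using M_max ideal_set_plus[OF M(1) ideal_principal] by blast
    moreover have "a \<in> M + principal_ideal a"
      using subset_set_plus_right[OF M(1)] mem_principal_ideal_self by blast
    ultimately show False using that by blast
  qed
  have "prime_ideal M" unfolding prime_ideal_def
  proof (intro conjI allI impI)
    show "M \<noteq> UNIV" using M(3) S1 by auto
    fix a b assume ab: "a * b \<in> M"
    show "a \<in> M \<or> b \<in> M"
    proof (rule ccontr)
      assume "\<not> (a \<in> M \<or> b \<in> M)"
      then obtain m1 r1 m2 r2 where m: "m1 \<in> M" "m2 \<in> M" "m1 + r1 * a \<in> S" "m2 + r2 * b \<in> S"
        using meets_S[of a] meets_S[of b] by blast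
      have "(m1 + r1 * a) * (m2 + r2 * b) = m1 * (m2 + r2 * b) + (r1 * a) * m2 + (r1 * r2) * (a * b)"
        by (simp add: algebra_simps)
      also have "\<dots> \<in> M" using m ab M(1) by (simp add: ideal_add ideal_mult_left ideal_mult_right)
      finally show False using S_mult[OF m(3) m(4)] M(3) by blast
    qed
  qed (rule M(1))
  then show ?thesis using M(2,3) by (rule that)
qed

section \<open>Zero-dimensional rings\<close>

text \<open>If \<open>x\<^sup>n \<notin> x\<^sup>n\<^sup>+\<^sup>1R\<close> for all \<open>n\<close>, the multiplicative set \<open>{x\<^sup>n(1 - xy)}\<close> avoids \<open>0\<close>;
  a prime disjoint from it contains neither \<open>x\<close> nor any \<open>1 - xy\<close>, so it is not maximal.\<close>
lemma zero_dimensional_pi_regular: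
  fixes x :: "'a::comm_ring_1"
  assumes zerodim: "\<And>P::'a set. prime_ideal P \<Longrightarrow> maximal_ideal P"
  obtains n y where "x ^ n = x ^ Suc n * y"
proof -
  have "\<exists>n y. x ^ n = x ^ Suc n * y"
  proof (rule ccontr)
    assume none: "\<not> ?thesis"
    define S where "S = {x ^ n * (1 - x * y) | n y. True}"
    have "1 = x ^ 0 * (1 - x * 0)" by simp
    then have S1: "1 \<in> S" unfolding S_def by blast
    have S_mult: "a * b \<in> S" if a: "a \<in> S" and b: "b \<in> S" for a b
    proof -
      obtain n y m z where "a = x ^ n * (1 - x * y)" "b = x ^ m * (1 - x * z)"
        using a b unfolding S_def by blast
      moreover have "x ^ n * (1 - x * y) * (x ^ m * (1 - x * z))
          = x ^ (n + m) * (1 - x * (y + z - x * y * z))"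
        by (simp add: power_add algebra_simps)
      ultimately have "a * b = x ^ (n + m) * (1 - x * (y + z - x * y * z))" by simp
      then show ?thesis unfolding S_def by blast
    qed
    have "x ^ n * (1 - x * y) \<noteq> 0" for n y
    proof
      assume "x ^ n * (1 - x * y) = 0"
      moreover have "x ^ n * (1 - x * y) = x ^ n - x ^ Suc n * y" by (simp add: algebra_simps)
      ultimately have "x ^ n = x ^ Suc n * y" by simp
      with none show False by blast
    qed
    then have "{0} \<inter> S = {}" unfolding S_def by auto
    moreover have "ideal {0::'a}" by (simp add: ideal_def)
    ultimately obtain Q where Q: "prime_ideal Q" "{0} \<subseteq> Q" "Q \<inter> S = {}"
      using S1 S_mult by (elim prime_ideal_disjoint_multiplicative)
    have "x = x ^ 1 * (1 - x * 0)" by simp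
    then have "x \<in> S" unfolding S_def by blast
    then obtain q r where "q \<in> Q" "1 = q + r * x"
      using Q maximal_ideal_one_combination[OF zerodim[OF Q(1)]] by blast
    then have "q = x ^ 0 * (1 - x * r)" by (simp add: algebra_simps)
    then show False using \<open>q \<in> Q\<close> Q(3) unfolding S_def by blast
  qed
  with that show ?thesis by blast
qed

lemma zero_dimensional_idempotent:
  fixes x :: "'a::comm_ring_1"
  assumes zerodim: "\<And>P::'a set. prime_ideal P \<Longrightarrow> maximal_ideal P"
  obtains f where "f * f = f" "x dvd f" "\<And>Q. prime_ideal Q \<Longrightarrow> f \<in> Q \<Longrightarrow> x \<in> Q"
proof -
  obtain n y where "x ^ n = x ^ Suc n * y" using zero_dimensional_pi_regular[OF zerodim] .
  then have xy: "x ^ Suc n = x ^ Suc n * (x * y)" by (simp add: algebra_simps)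
  have pow: "x ^ Suc n = x ^ Suc n * (x * y) ^ k" for k
  proof (induction k)
    case (Suc k)
    have "x ^ Suc n * (x * y) ^ Suc k = (x ^ Suc n * (x * y)) * (x * y) ^ k"
      by (simp only: power_Suc[of "x * y" k] mult.assoc)
    also have "\<dots> = x ^ Suc n" by (simp only: xy[symmetric] Suc.IH[symmetric])
    finally show ?case ..
  qed simp
  define f where "f = (x * y) ^ Suc n"
  have xf: "x ^ Suc n = x ^ Suc n * f" unfolding f_def by (rule pow)
  show ?thesis
  proof
    have "f * f = (x ^ Suc n * f) * y ^ Suc n" by (simp add: f_def power_mult_distrib algebra_simps)
    also have "\<dots> = x ^ Suc n * y ^ Suc n" by (simp only: xf[symmetric])
    finally show "f * f = f" by (simp add: f_def power_mult_distrib)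
    show "x dvd f" unfolding f_def by simp
    fix Q assume "prime_ideal Q" "f \<in> Q"
    then have "x ^ Suc n \<in> Q" using xf by (metis ideal_mult_left prime_ideal_ideal)
    then show "x \<in> Q" using prime_ideal_power \<open>prime_ideal Q\<close> by blast
  qed
qed

text \<open>With idempotents \<open>f\<^sub>i\<close> attached to the \<open>g\<^sub>i\<close>, the element \<open>\<Prod>(1 - f\<^sub>i)\<close> stays outside \<open>P\<close>
  but is killed by \<open>f\<^sub>i \<notin> Q\<close> at every prime \<open>Q\<close> missing some \<open>g\<^sub>i\<close>.\<close>
lemma zero_dimensional_element_outside_prime:
  fixes g :: "nat \<Rightarrow> 'a::comm_ring_1"
  assumes zerodim: "\<And>P::'a set. prime_ideal P \<Longrightarrow> maximal_ideal P"
    and P: "prime_ideal P" and gP: "\<And>i. i < k \<Longrightarrow> g i \<in> P"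
  obtains r where "r \<notin> P" "\<And>Q i. prime_ideal Q \<Longrightarrow> i < k \<Longrightarrow> g i \<notin> Q \<Longrightarrow> loc_zero Q r"
proof -
  have idempotents: "\<forall>i. \<exists>f. f * f = f \<and> g i dvd f \<and> (\<forall>Q. prime_ideal Q \<longrightarrow> f \<in> Q \<longrightarrow> g i \<in> Q)"
  proof
    fix i
    show "\<exists>f. f * f = f \<and> g i dvd f \<and> (\<forall>Q. prime_ideal Q \<longrightarrow> f \<in> Q \<longrightarrow> g i \<in> Q)"
      by (rule zero_dimensional_idempotent[OF zerodim, of "g i"]) auto
  qed
  obtain f where f: "\<forall>i. f i * f i = f i \<and> g i dvd f i \<and> (\<forall>Q. prime_ideal Q \<longrightarrow> f i \<in> Q \<longrightarrow> g i \<in> Q)"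
    using choice[OF idempotents] by auto
  then have idem: "\<And>i. f i * f i = f i" and dvd: "\<And>i. g i dvd f i"
    and f_prime: "\<And>i Q. prime_ideal Q \<Longrightarrow> f i \<in> Q \<Longrightarrow> g i \<in> Q"
    by simp_all
  define r where "r = (\<Prod>i<k. 1 - f i)"
  have "1 - f i \<notin> P" if "i < k" for i
  proof
    assume "1 - f i \<in> P"
    moreover obtain c where "f i = g i * c" using dvd[of i] by (rule dvdE)
    then have "f i \<in> P" using gP[OF that] ideal_mult_right[OF prime_ideal_ideal[OF P]] by simp
    ultimately have "(1 - f i) + f i \<in> P" by (rule ideal_add[OF prime_ideal_ideal[OF P]])
    then have "1 \<in> P" by simp
    then show False using P prime_ideal_one_notin by blast
  qed
  then have "r \<notin> P" unfolding r_def using P by (intro prime_ideal_prod_notin) auto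
  moreover have "loc_zero Q r" if Q: "prime_ideal Q" "i < k" "g i \<notin> Q" for Q i
  proof -
    have r_split: "r = (1 - f i) * (\<Prod>j\<in>{..<k} - {i}. 1 - f j)"
      unfolding r_def using Q(2) by (subst prod.remove[of _ i]) auto
    have "f i * r = (f i - f i * f i) * (\<Prod>j\<in>{..<k} - {i}. 1 - f j)"
      unfolding r_split by (simp add: algebra_simps)
    then have "f i * r = 0" using idem[of i] by simp
    moreover have "f i \<notin> Q" using f_prime[OF Q(1)] Q(3) by blast
    ultimately show ?thesis unfolding loc_zero_def by blast
  qed
  ultimately show ?thesis by (rule that)
qed

section \<open>Annihilators in P-coherent rings\<close>

lemma mem_span_generator:
  fixes t :: "nat \<Rightarrow> 'a::comm_ring_1"
  shows "j < k \<Longrightarrow> t j \<in> {(\<Sum>i<k. c i * t i) | c. True}"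
  by (intro CollectI exI[of _ "\<lambda>i. of_bool (i = j)"]) simp

lemma annihilator_eq_span:
  fixes a :: "'a::comm_ring_1" and k :: nat
  assumes gen: "\<And>i. i < k \<Longrightarrow> t i * a = 0"
    and span: "\<And>r. r * a = 0 \<Longrightarrow> \<exists>c. r = (\<Sum>i<k. c i * t i)"
  shows "{r. r * a = 0} = {(\<Sum>i<k. c i * t i) | c. True}"
proof (intro equalityI subsetI)
  fix r assume "r \<in> {r. r * a = 0}"
  then show "r \<in> {(\<Sum>i<k. c i * t i) | c. True}" using span by simp
next
  fix r assume "r \<in> {(\<Sum>i<k. c i * t i) | c. True}"
  then obtain c where r: "r = (\<Sum>i<k. c i * t i)" by blast
  have "r * a = (\<Sum>i<k. c i * (t i * a))"
    unfolding r sum_distrib_right by (rule sum.cong) (simp_all add: mult.assoc)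
  also have "\<dots> = 0" by (rule sum.neutral) (simp add: gen)
  finally show "r \<in> {r. r * a = 0}" by simp
qed

text \<open>Write \<open>(a) = (x\<^sub>0, \<dots>, x\<^sub>n\<^sub>-\<^sub>1)\<close> with \<open>x\<^sub>i = u\<^sub>i a\<close> and \<open>a = \<Sum> d\<^sub>i x\<^sub>i\<close>. If \<open>ra = 0\<close>, then
  \<open>(r d\<^sub>i)\<^sub>i\<close> is a relation, hence a combination of the generating relations \<open>g\<^sub>j\<close>; so \<open>Ann a\<close>
  is generated by \<open>1 - \<Sum> d\<^sub>i u\<^sub>i\<close> and the elements \<open>\<Sum>\<^sub>i g\<^sub>j\<^sub>i u\<^sub>i\<close>.\<close>
lemma annihilator_from_presentation:
  fixes a :: "'a::comm_ring_1" and m :: nat and g :: "nat \<Rightarrow> nat \<Rightarrow> 'a"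
  assumes x: "\<And>i. i < n \<Longrightarrow> x i = u i * a"
    and a: "a = (\<Sum>i<n. d i * x i)"
    and K: "relation_module n x = {(\<lambda>i. \<Sum>j<m. s j * g j i) | s. True}"
  shows "\<exists>(k::nat) t. {r. r * a = 0} = {(\<Sum>i<k. c i * t i) | c. True}"
proof -
  define t where "t = case_nat (1 - (\<Sum>i<n. d i * u i)) (\<lambda>j. \<Sum>i<n. g j i * u i)"
  have comb: "(\<Sum>i<n. v i * u i) * a = (\<Sum>i<n. v i * x i)" for v
    unfolding sum_distrib_right by (rule sum.cong) (simp_all add: x mult.assoc)
  have t_ann: "t i * a = 0" if "i < Suc m" for i
  proof (cases i)
    case 0
    have "t i * a = a - (\<Sum>i<n. d i * u i) * a" by (simp add: 0 t_def algebra_simps)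
    also have "\<dots> = 0" by (simp only: comb a[symmetric]) simp
    finally show ?thesis .
  next
    case (Suc j)
    with that have "j < m" by simp
    have "g j \<in> relation_module n x" unfolding K
      by (rule CollectI, rule exI[of _ "\<lambda>j'. of_bool (j' = j)"]) (simp add: \<open>j < m\<close>)
    then show ?thesis using comb[of "g j"] by (simp add: Suc t_def relation_module_def)
  qed
  have in_span: "\<exists>c. r = (\<Sum>i<Suc m. c i * t i)" if ra: "r * a = 0" for r
  proof -
    have "(\<Sum>i<n. (if i < n then r * d i else 0) * x i) = r * (\<Sum>i<n. d i * x i)"
      unfolding sum_distrib_left by (rule sum.cong) (simp_all add: mult.assoc)
    then have "(\<lambda>i. if i < n then r * d i else 0) \<in> relation_module n x"
      using a ra by (simp add: relation_module_def)
    then obtain s where s_eq: "(\<lambda>i. if i < n then r * d i else 0) = (\<lambda>i. \<Sum>j<m. s j * g j i)"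
      using K by blast
    have s: "r * d i = (\<Sum>j<m. s j * g j i)" if "i < n" for i
      using fun_cong[OF s_eq, of i] that by simp
    have "r = r * t 0 + (\<Sum>i<n. (r * d i) * u i)"
      by (simp add: t_def sum_distrib_left algebra_simps)
    also have "(\<Sum>i<n. (r * d i) * u i) = (\<Sum>i<n. \<Sum>j<m. s j * g j i * u i)"
      by (rule sum.cong) (simp_all add: s sum_distrib_right)
    also have "\<dots> = (\<Sum>j<m. s j * t (Suc j))"
      unfolding t_def by (subst sum.swap) (simp add: sum_distrib_left algebra_simps)
    also have "r * t 0 + (\<Sum>j<m. s j * t (Suc j)) = (\<Sum>i<Suc m. case_nat r s i * t i)"
      by (subst sum.lessThan_Suc_shift) simp
    finally have "r = (\<Sum>i<Suc m. case_nat r s i * t i)" .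
    then show ?thesis by blast
  qed
  from annihilator_eq_span[OF t_ann in_span] show ?thesis by blast
qed

lemma P_coherent_annihilator:
  fixes a :: "'a::comm_ring_1"
  assumes "P_coherent TYPE('a)"
  shows "\<exists>(k::nat) t. {r. r * a = 0} = {(\<Sum>i<k. c i * t i) | c. True}"
proof -
  obtain n x and m :: nat and g :: "nat \<Rightarrow> nat \<Rightarrow> 'a"
    where span: "principal_ideal a = {(\<Sum>i<n. c i * x i) | c. True}"
      and K: "relation_module n x = {(\<lambda>i. \<Sum>j<m. s j * g j i) | s. True}"
    using assms unfolding P_coherent_def finitely_presented_ideal_def fin_gen_submodule_def
    by blast
  obtain d where d: "a = (\<Sum>i<n. d i * x i)"
    using span mem_principal_ideal_self by blast
  have "\<forall>i. \<exists>u. i < n \<longrightarrow> x i = u * a"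
  proof (intro allI)
    fix i
    show "\<exists>u. i < n \<longrightarrow> x i = u * a"
    proof (cases "i < n")
      case True
      have "x i \<in> principal_ideal a" unfolding span using True by (rule mem_span_generator)
      then show ?thesis unfolding principal_ideal_def by blast
    qed simp
  qed
  then have "\<exists>u. \<forall>i. i < n \<longrightarrow> x i = u i * a" by (rule choice)
  then obtain u where "\<forall>i. i < n \<longrightarrow> x i = u i * a" by blast
  then have "\<And>i. i < n \<Longrightarrow> x i = u i * a" by blast
  from annihilator_from_presentation[OF this d K] show ?thesis .
qed

section \<open>The kernel of the localization map\<close>

lemma loc_kernel_ideal:
  assumes X: "\<And>P. P \<in> X \<Longrightarrow> prime_ideal P"
  shows "ideal (loc_kernel X)"
  unfolding ideal_def
proof (intro conjI ballI allI)
  show "0 \<in> loc_kernel X"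
    using X prime_ideal_one_notin unfolding loc_kernel_def loc_zero_def by fastforce
next
  fix x y assume x: "x \<in> loc_kernel X" and y: "y \<in> loc_kernel X"
  show "x + y \<in> loc_kernel X" unfolding loc_kernel_def
  proof (intro CollectI ballI)
    fix P assume "P \<in> X"
    then obtain s t where st: "s \<notin> P" "s * x = 0" "t \<notin> P" "t * y = 0"
      using x y unfolding loc_kernel_def loc_zero_def by blast
    have "(s * t) * (x + y) = t * (s * x) + s * (t * y)" by (simp add: algebra_simps)
    then have "(s * t) * (x + y) = 0" using st by simp
    moreover have "s * t \<notin> P" using prime_ideal_mult_notin[OF X[OF \<open>P \<in> X\<close>]] st by blast
    ultimately show "loc_zero P (x + y)" unfolding loc_zero_def by blast
  qed
next
  fix r x assume x: "x \<in> loc_kernel X"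
  show "r * x \<in> loc_kernel X" unfolding loc_kernel_def
  proof (intro CollectI ballI)
    fix P assume "P \<in> X"
    then obtain s where "s \<notin> P" "s * x = 0"
      using x unfolding loc_kernel_def loc_zero_def by blast
    moreover have "s * (r * x) = r * (s * x)" by (simp add: algebra_simps)
    ultimately show "loc_zero P (r * x)" unfolding loc_zero_def by auto
  qed
qed

lemma loc_kernel_subset:
  assumes P: "prime_ideal P" "P \<in> X"
  shows "loc_kernel X \<subseteq> P"
proof
  fix a assume "a \<in> loc_kernel X"
  then obtain s where "s \<notin> P" "s * a = 0"
    using P(2) unfolding loc_kernel_def loc_zero_def by blast
  moreover have "s * a \<in> P" using ideal_zero[OF prime_ideal_ideal[OF P(1)]] \<open>s * a = 0\<close> by simp
  ultimately show "a \<in> P" using P(1) unfolding prime_ideal_def by blast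
qed

lemma annihilator_generator_notin_prime:
  fixes p :: "'a::comm_ring_1" and k :: nat
  assumes Q: "prime_ideal Q" "ext_zero Q" "p \<in> Q"
    and ann: "{r. r * p = 0} = {(\<Sum>i<k. c i * t i) | c. True}"
  shows "\<exists>j<k. t j \<notin> Q"
proof (rule ccontr)
  assume "\<not> ?thesis"
  then have tQ: "t j \<in> Q" if "j < k" for j using that by blast
  obtain s where "s \<notin> Q" "s * p = 0" using Q unfolding ext_zero_def loc_zero_def by blast
  then obtain c where "s = (\<Sum>i<k. c i * t i)" using ann by blast
  with ideal_sum_lessThan[OF prime_ideal_ideal[OF Q(1)] tQ] \<open>s \<notin> Q\<close> show False by simp
qed

lemma ext_zero_if_loc_kernel_subset:
  fixes P :: "'a::comm_ring_1 set"
  assumes zerodim: "\<And>P::'a set. prime_ideal P \<Longrightarrow> maximal_ideal P"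
    and coh: "P_coherent TYPE('a)"
    and X: "\<And>Q. Q \<in> X \<Longrightarrow> prime_ideal Q \<and> ext_zero Q"
    and P: "prime_ideal P" and kernel_P: "loc_kernel X \<subseteq> P"
  shows "ext_zero P"
  unfolding ext_zero_def
proof (intro ballI, rule ccontr)
  fix p assume "p \<in> P" and p_nonzero: "\<not> loc_zero P p"
  obtain k :: nat and t where ann: "{r. r * p = 0} = {(\<Sum>i<k. c i * t i) | c. True}"
    using P_coherent_annihilator[OF coh, where a = p] by (elim exE)
  define g where "g = case_nat p t"
  have gP: "g i \<in> P" if "i < Suc k" for i
  proof (cases i)
    case 0 then show ?thesis using \<open>p \<in> P\<close> by (simp add: g_def)
  next
    case (Suc j)
    have "t j \<in> {r. r * p = 0}" unfolding ann using Suc that by (intro mem_span_generator) simp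
    then show ?thesis using p_nonzero Suc unfolding loc_zero_def g_def by auto
  qed
  obtain r where "r \<notin> P" and r: "\<And>Q i. prime_ideal Q \<Longrightarrow> i < Suc k \<Longrightarrow> g i \<notin> Q \<Longrightarrow> loc_zero Q r"
    using zero_dimensional_element_outside_prime[OF zerodim P, where k = "Suc k" and g = g] gP by blast
  have "r \<in> loc_kernel X" unfolding loc_kernel_def
  proof (intro CollectI ballI)
    fix Q assume "Q \<in> X"
    then have Q: "prime_ideal Q" "ext_zero Q" using X by blast+
    have "\<exists>i<Suc k. g i \<notin> Q"
    proof (cases "p \<in> Q")
      case True
      then obtain j where "j < k" "t j \<notin> Q"
        using annihilator_generator_notin_prime[OF Q True ann] by blast
      then show ?thesis by (intro exI[of _ "Suc j"]) (simp add: g_def)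
    next
      case False
      then show ?thesis by (intro exI[of _ 0]) (simp add: g_def)
    qed
    then show "loc_zero Q r" using r Q(1) by blast
  qed
  with kernel_P \<open>r \<notin> P\<close> show False by blast
qed

text \<open>If \<open>1 \<notin> A + Ann a\<close>, a prime \<open>Q\<close> over it lies in \<open>V A \<subseteq> X\<close>; then \<open>a/1 = 0\<close> in \<open>R\<^sub>Q\<close> puts
  an element outside \<open>Q\<close> into \<open>Ann a \<subseteq> Q\<close>.\<close>
lemma loc_kernel_self_multiplier:
  assumes X: "\<And>P. P \<in> X \<Longrightarrow> prime_ideal P" and V_X: "V (loc_kernel X) \<subseteq> X"
    and a: "a \<in> loc_kernel X"
  shows "\<exists>e\<in>loc_kernel X. a * e = a"
proof (rule ccontr)
  assume none: "\<not> ?thesis"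
  let ?A = "loc_kernel X" and ?J = "loc_kernel X + {r. r * a = 0}"
  have A: "ideal ?A" using loc_kernel_ideal X by blast
  have J: "ideal ?J" using ideal_set_plus[OF A ideal_annihilator] .
  have "1 \<notin> ?J"
  proof
    assume "1 \<in> ?J"
    then obtain e r where er: "1 = e + r" "e \<in> ?A" "r \<in> {r. r * a = 0}" by (rule set_plus_elim)
    have "a = a * (e + r)" by (simp add: er(1)[symmetric])
    also have "\<dots> = a * e + r * a" by (simp add: algebra_simps)
    finally have "a * e = a" using er(3) by simp
    with none \<open>e \<in> ?A\<close> show False by blast
  qed
  then have "?J \<inter> {1} = {}" by blast
  then obtain Q where Q: "prime_ideal Q" "?J \<subseteq> Q" "Q \<inter> {1} = {}"
    using J by (elim prime_ideal_disjoint_multiplicative) auto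
  have "?A \<subseteq> Q" using subset_set_plus_left[OF ideal_annihilator] Q(2) by (rule subset_trans)
  then have "Q \<in> V ?A" using Q(1) by (simp add: V_def)
  with V_X have "Q \<in> X" by blast
  then obtain s where "s \<notin> Q" "s * a = 0" using a unfolding loc_kernel_def loc_zero_def by blast
  then have "s \<in> ?J" using subset_set_plus_right[OF A, of "{r. r * a = 0}"] by blast
  with Q(2) \<open>s \<notin> Q\<close> show False by blast
qed

section \<open>Pure ideals\<close>

text \<open>The map of free abelian groups induced by \<open>g\<close>; only meaningful for finitely supported \<open>x\<close>.\<close>
definition push_forward :: "('x \<Rightarrow> 'y) \<Rightarrow> ('x \<Rightarrow> int) \<Rightarrow> 'y \<Rightarrow> int" where
  "push_forward g x = (\<lambda>q. \<Sum>p | x p \<noteq> 0. if g p = q then x p else 0)"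

lemma push_forward_eq_sum:
  assumes "finite F" "{p. x p \<noteq> 0} \<subseteq> F"
  shows "push_forward g x q = (\<Sum>p\<in>F. if g p = q then x p else 0)"
  unfolding push_forward_def using assms by (intro sum.mono_neutral_right[symmetric]) auto

lemma finite_support_delta: "finite {q. delta p q \<noteq> 0}"
  by (simp add: delta_def)

text \<open>Stated with \<open>x q \<noteq> y q\<close>, the form to which the simplifier normalizes \<open>x q - y q \<noteq> 0\<close>.\<close>
lemma finite_support_diff:
  "finite {q. x q \<noteq> 0} \<Longrightarrow> finite {q. y q \<noteq> 0} \<Longrightarrow> finite {q. x q \<noteq> (y q :: int)}"
  by (rule finite_subset[of _ "{q. x q \<noteq> 0} \<union> {q. y q \<noteq> 0}"]) auto

lemma push_forward_delta: "push_forward g (delta p) = delta (g p)"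
proof
  fix q
  have "push_forward g (delta p) q = (\<Sum>p'\<in>{p}. if g p' = q then delta p p' else 0)"
    by (rule push_forward_eq_sum) (auto simp: delta_def)
  then show "push_forward g (delta p) q = delta (g p) q" by (simp add: delta_def)
qed

lemma push_forward_diff:
  assumes "finite {p. x p \<noteq> 0}" "finite {p. y p \<noteq> 0}"
  shows "push_forward g (\<lambda>q. x q - y q) = (\<lambda>q. push_forward g x q - push_forward g y q)"
proof
  fix q
  let ?F = "{p. x p \<noteq> 0} \<union> {p. y p \<noteq> 0}"
  have "push_forward g (\<lambda>q. x q - y q) q = (\<Sum>p\<in>?F. if g p = q then x p - y p else 0)"
    by (rule push_forward_eq_sum) (use assms in auto)
  also have "\<dots> = (\<Sum>p\<in>?F. (if g p = q then x p else 0) - (if g p = q then y p else 0))"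
    by (rule sum.cong) auto
  also have "\<dots> = push_forward g x q - push_forward g y q"
    by (simp only: sum_subtractf, subst (1 2) push_forward_eq_sum[of ?F]) (use assms in auto)
  finally show "push_forward g (\<lambda>q. x q - y q) q = push_forward g x q - push_forward g y q" .
qed

lemma push_forward_delta_diff2:
  "push_forward g (\<lambda>q. delta p1 q - delta p2 q) = (\<lambda>q. delta (g p1) q - delta (g p2) q)"
  by (simp add: push_forward_diff push_forward_delta finite_support_delta)

lemma push_forward_delta_diff3:
  "push_forward g (\<lambda>q. delta p1 q - delta p2 q - delta p3 q)
    = (\<lambda>q. delta (g p1) q - delta (g p2) q - delta (g p3) q)"
  by (simp add: push_forward_diff push_forward_delta finite_support_delta finite_support_diff)

lemma push_forward_eq_self:
  assumes "finite {p. x p \<noteq> 0}" "\<And>p. x p \<noteq> 0 \<Longrightarrow> g p = p"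
  shows "push_forward g x = x"
proof
  fix q
  have "push_forward g x q = (\<Sum>p | x p \<noteq> 0. if p = q then x p else 0)"
    unfolding push_forward_def by (rule sum.cong) (simp_all add: assms(2))
  also have "\<dots> = x q" using assms(1) by (simp add: sum.delta)
  finally show "push_forward g x q = x q" .
qed

lemma tensor_rel_span_finite_support:
  "x \<in> tensor_rel_span scale B \<Longrightarrow> finite {q. x q \<noteq> 0}"
proof (induction rule: tensor_rel_span.induct)
  case (gen x)
  then show ?case
    unfolding tensor_relators_def by (auto simp: finite_support_delta finite_support_diff)
qed (simp_all add: finite_support_diff)

lemma push_forward_tensor_rel_span:
  assumes "\<And>x. x \<in> tensor_relators scale B \<Longrightarrow> push_forward g x \<in> tensor_rel_span scale' B'"
  shows "x \<in> tensor_rel_span scale B \<Longrightarrow> push_forward g x \<in> tensor_rel_span scale' B'"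
proof (induction rule: tensor_rel_span.induct)
  case zero
  then show ?case by (simp add: push_forward_def tensor_rel_span.zero)
next
  case (gen x)
  then show ?case by (rule assms)
next
  case (diff x y)
  then show ?case
    by (simp add: push_forward_diff tensor_rel_span_finite_support tensor_rel_span.diff)
qed

lemma push_forward_mult_tensor_relator:
  assumes A: "ideal A" and e: "e \<in> A" and x: "x \<in> tensor_relators scale UNIV"
  shows "push_forward (\<lambda>(a, m). (a * e, m)) x \<in> tensor_relators scale A"
proof -
  have Ae: "a * e \<in> A" for a using A e by (rule ideal_mult_left)
  from x consider
      (add_left) a a' m where "x = (\<lambda>q. delta (a + a', m) q - delta (a, m) q - delta (a', m) q)"
    | (add_right) a m m' where "x = (\<lambda>q. delta (a, m + m') q - delta (a, m) q - delta (a, m') q)"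
    | (scalar) r a m where "x = (\<lambda>q. delta (r * a, m) q - delta (a, scale r m) q)"
    unfolding tensor_relators_def by blast
  then show ?thesis
  proof cases
    case add_left
    then have "push_forward (\<lambda>(a, m). (a * e, m)) x
        = (\<lambda>q. delta (a * e + a' * e, m) q - delta (a * e, m) q - delta (a' * e, m) q)"
      by (simp add: push_forward_delta_diff3 distrib_right)
    then show ?thesis unfolding tensor_relators_def using Ae by blast
  next
    case add_right
    then have "push_forward (\<lambda>(a, m). (a * e, m)) x
        = (\<lambda>q. delta (a * e, m + m') q - delta (a * e, m) q - delta (a * e, m') q)"
      by (simp add: push_forward_delta_diff3)
    then show ?thesis unfolding tensor_relators_def using Ae by blast
  next
    case scalar
    then have "push_forward (\<lambda>(a, m). (a * e, m)) x
        = (\<lambda>q. delta (r * (a * e), m) q - delta (a * e, scale r m) q)"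
      by (simp add: push_forward_delta_diff2 mult.assoc)
    then show ?thesis unfolding tensor_relators_def using Ae by blast
  qed
qed

lemma ideal_common_multiplier:
  assumes A: "ideal A" and mult: "\<And>a. a \<in> A \<Longrightarrow> \<exists>e\<in>A. a * e = a"
  shows "finite F \<Longrightarrow> F \<subseteq> A \<Longrightarrow> \<exists>e\<in>A. \<forall>a\<in>F. a * e = a"
proof (induction F rule: finite_induct)
  case empty
  then show ?case using ideal_zero[OF A] by blast
next
  case (insert b F)
  then obtain e where e: "e \<in> A" "\<forall>a\<in>F. a * e = a" by blast
  obtain c where c: "c \<in> A" "b * c = b" using mult insert.prems by blast
  have "e + c - e * c \<in> A"
    using ideal_diff[OF A ideal_add[OF A e(1) c(1)] ideal_mult_left[OF A c(1)]] .
  moreover have "a * (e + c - e * c) = a" if "a \<in> insert b F" for a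
  proof (cases "a = b")
    case True
    have "a * (e + c - e * c) = a * e + a * c - (a * c) * e" by (simp add: algebra_simps)
    then show ?thesis using True c(2) by simp
  next
    case False
    have "a * (e + c - e * c) = a * e + a * c - (a * e) * c" by (simp add: algebra_simps)
    then show ?thesis using False that e(2) by simp
  qed
  ultimately show ?case by blast
qed

lemma pure_ideal_if_self_multipliers:
  assumes A: "ideal A" and mult: "\<And>a. a \<in> A \<Longrightarrow> \<exists>e\<in>A. a * e = a"
  shows "pure_ideal TYPE('m::ab_group_add) A"
  unfolding pure_ideal_def
proof (intro conjI allI impI A)
  fix scale :: "'a \<Rightarrow> 'm \<Rightarrow> 'm" and xs :: "('a \<times> 'm) list"
  assume xs: "set xs \<subseteq> A \<times> UNIV" and zero: "formal_sum xs \<in> tensor_rel_span scale UNIV"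
  have "fst ` set xs \<subseteq> A" using xs by auto
  then obtain e where "e \<in> A" and e: "\<forall>a\<in>fst ` set xs. a * e = a"
    using ideal_common_multiplier[OF A mult finite_imageI[OF finite_set]] by blast
  have support: "{p. formal_sum xs p \<noteq> 0} = set xs"
    by (auto simp: formal_sum_def count_list_0_iff)
  have "push_forward (\<lambda>(a, m). (a * e, m)) (formal_sum xs) = formal_sum xs"
  proof (rule push_forward_eq_self)
    show "finite {p. formal_sum xs p \<noteq> 0}" by (simp add: support)
    fix p assume "formal_sum xs p \<noteq> 0"
    then have "p \<in> set xs" using support by blast
    moreover obtain a m where "p = (a, m)" by (cases p)
    ultimately have "a * e = a" using e by force
    then show "(\<lambda>(a, m). (a * e, m)) p = p" using \<open>p = (a, m)\<close> by simp
  qed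
  moreover have "\<And>x. x \<in> tensor_relators scale UNIV \<Longrightarrow>
      push_forward (\<lambda>(a, m). (a * e, m)) x \<in> tensor_rel_span scale A"
    using push_forward_mult_tensor_relator[OF A \<open>e \<in> A\<close>] tensor_rel_span.gen by blast
  ultimately show "formal_sum xs \<in> tensor_rel_span scale A"
    using push_forward_tensor_rel_span[OF _ zero] by metis
qed

theorem proposition3p8:
  fixes X :: "'a::comm_ring_1 set set" and A :: "'a set"
  assumes zerodim: "\<And>P::'a set. prime_ideal P \<Longrightarrow> maximal_ideal P"
    and X_def: "X = {P. maximal_ideal P \<and> ext_zero P}"
    and A_def: "A = loc_kernel X"
    and coh: "P_coherent TYPE('a)"
  shows "pure_ideal TYPE('m::ab_group_add) A \<and> X = V A"
proof -
  have X_prime: "\<And>P. P \<in> X \<Longrightarrow> prime_ideal P"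
    using X_def maximal_imp_prime_ideal by blast
  have "X \<subseteq> V A"
    using X_prime loc_kernel_subset unfolding V_def A_def by blast
  moreover have "V A \<subseteq> X"
  proof
    fix P assume "P \<in> V A"
    then have "prime_ideal P" "loc_kernel X \<subseteq> P" by (simp_all add: V_def A_def)
    then have "ext_zero P"
      using ext_zero_if_loc_kernel_subset[OF zerodim coh] X_prime X_def by blast
    with \<open>prime_ideal P\<close> show "P \<in> X" using zerodim X_def by blast
  qed
  ultimately have "X = V A" by blast
  moreover have "pure_ideal TYPE('m) A"
    using loc_kernel_ideal[OF X_prime] loc_kernel_self_multiplier[OF X_prime] \<open>X = V A\<close>
    unfolding A_def by (intro pure_ideal_if_self_multipliers) auto
  ultimately show ?thesis by blast
qed

end
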